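(* Let $H$ be a topological group which is either completely metrizable or locally compact Hausdorff, let $G$ be a group with $|G|<2^{\aleph_0}$, and let $\phi:H\to G$ be a group homomorphism. Then there exists an open neighborhood $V$ of $1_H$ such that for every neighborhood $V'$ of $1_H$ with $V'\subseteq V$ we have $\phi(V')=\phi(V)$. *)

theory Defs
  imports "HOL-Analysis.Analysis" "HOL-Algebra.Group" "HOL-Library.Equipollence"
begin

definition topological_group :: "('a, 'b) monoid_scheme \<Rightarrow> 'a topology \<Rightarrow> bool" where
  "topological_group H T \<longleftrightarrow>
     group H \<and> topspace T = carrier H \<and>
     continuous_map (prod_topology T T) T (\<lambda>(x, y). x \<otimes>\<^bsub>H\<^esub> y) \<and>
     continuous_map T T (\<lambda>x. inv\<^bsub>H\<^esub> x)"

definition nhd_in :: "'a topology \<Rightarrow> 'a \<Rightarrow> 'a set \<Rightarrow> bool" where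
  "nhd_in T x N \<longleftrightarrow> (\<exists>U. openin T U \<and> x \<in> U \<and> U \<subseteq> N)"

end

theory Submission
  imports Defs "HOL-Algebra.Coset"
begin

text \<open>Suppose no such \<open>V\<close> exists. Then every nonempty open set \<open>Q \<ni> p\<close> can be split: choose
  a neighbourhood \<open>V\<close> of \<open>1\<close> with \<open>p V V \<subseteq> Q\<close>, a smaller neighbourhood \<open>N\<close> and \<open>h \<in> V\<close> with
  \<open>\<phi> h \<notin> \<phi>(N)\<close>, and a symmetric \<open>W\<close> with \<open>W W \<subseteq> N\<close>; then \<open>p W\<close> and \<open>p h W\<close> have closures
  inside \<open>Q\<close> and disjoint \<open>\<phi>\<close>-images. Splitting repeatedly along every infinite binary
  sequence gives nested sequences of open sets, each of which has a point by completeness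
  (or local compactness); points on different branches have different images, so \<open>G\<close>
  would contain \<open>2^\<aleph>\<^sub>0\<close> elements.\<close>

text \<open>\<open>P n\<close> is a smallness condition to which every nonempty open subset of \<open>R\<close> can be shrunk:
  lying in a closed ball of radius \<open>1/(n+1)\<close> for a complete metric, vacuous under local
  compactness.\<close>

definition nest_complete_on :: "'a topology \<Rightarrow> 'a set \<Rightarrow> (nat \<Rightarrow> 'a set \<Rightarrow> bool) \<Rightarrow> bool" where
  "nest_complete_on T R P \<longleftrightarrow> openin T R \<and> R \<noteq> {} \<and>
     (\<forall>n Q. openin T Q \<and> Q \<noteq> {} \<and> Q \<subseteq> R \<longrightarrow> (\<exists>Q'. openin T Q' \<and> Q' \<noteq> {} \<and> Q' \<subseteq> Q \<and> P n Q')) \<and>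
     (\<forall>Os. (\<forall>k. openin T (Os k) \<and> Os k \<noteq> {} \<and> T closure_of Os (Suc k) \<subseteq> Os k \<and> P k (Os (Suc k)))
            \<and> Os 0 \<subseteq> R \<longrightarrow> (\<Inter>k. Os k) \<noteq> {})"

lemma nest_complete_onD:
  assumes "nest_complete_on T R P"
  shows "openin T R" and "R \<noteq> {}"
    and "\<And>n Q. openin T Q \<Longrightarrow> Q \<noteq> {} \<Longrightarrow> Q \<subseteq> R \<Longrightarrow>
           \<exists>Q'. openin T Q' \<and> Q' \<noteq> {} \<and> Q' \<subseteq> Q \<and> P n Q'"
    and "\<And>Os. (\<And>k. openin T (Os k) \<and> Os k \<noteq> {} \<and> T closure_of Os (Suc k) \<subseteq> Os k
           \<and> P k (Os (Suc k))) \<Longrightarrow> Os 0 \<subseteq> R \<Longrightarrow> (\<Inter>k. Os k) \<noteq> {}"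
  using assms unfolding nest_complete_on_def by blast+

lemma closure_of_nest:
  assumes sub: "\<And>k. Os k \<subseteq> topspace T" and nest: "\<And>k. T closure_of Os (Suc k) \<subseteq> Os k"
  shows "decseq (\<lambda>k. T closure_of Os (Suc k))"
    and "(\<Inter>k. T closure_of Os (Suc k)) = (\<Inter>k. Os k)"
proof -
  have Os_closure: "Os k \<subseteq> T closure_of Os k" for k
    using sub by (rule closure_of_subset)
  show "decseq (\<lambda>k. T closure_of Os (Suc k))"
    by (rule decseq_SucI) (use nest Os_closure in blast)
  show "(\<Inter>k. T closure_of Os (Suc k)) = (\<Inter>k. Os k)"
  proof
    show "(\<Inter>k. T closure_of Os (Suc k)) \<subseteq> (\<Inter>k. Os k)" using nest by blast
    show "(\<Inter>k. Os k) \<subseteq> (\<Inter>k. T closure_of Os (Suc k))" using Os_closure by blast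
  qed
qed

lemma completely_metrizable_imp_nest_complete:
  assumes "completely_metrizable_space T" and "topspace T \<noteq> {}"
  shows "\<exists>P. nest_complete_on T (topspace T) P"
proof -
  obtain M d where "Metric_space M d" and complete: "Metric_space.mcomplete M d"
    and T: "T = Metric_space.mtopology M d"
    using assms(1) unfolding completely_metrizable_space_def by blast
  interpret Metric_space M d by fact
  define P where "P n Q \<longleftrightarrow> (\<exists>a. Q \<subseteq> mcball a (1 / real (Suc n)))" for n Q
  have "nest_complete_on T (topspace T) P"
    unfolding nest_complete_on_def
  proof (intro conjI allI impI)
    fix n Q assume Q: "openin T Q \<and> Q \<noteq> {} \<and> Q \<subseteq> topspace T"
    then obtain a where a: "a \<in> Q" by blast
    then have "a \<in> M" using Q T by auto
    show "\<exists>Q'. openin T Q' \<and> Q' \<noteq> {} \<and> Q' \<subseteq> Q \<and> P n Q'"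
    proof (intro exI conjI)
      show "openin T (Q \<inter> mball a (1 / real (Suc n)))" using Q T by (simp add: openin_Int)
      show "Q \<inter> mball a (1 / real (Suc n)) \<noteq> {}" using a \<open>a \<in> M\<close> by auto
      show "P n (Q \<inter> mball a (1 / real (Suc n)))" unfolding P_def using mball_subset_mcball by blast
    qed blast
  next
    fix Os assume Os: "(\<forall>k. openin T (Os k) \<and> Os k \<noteq> {} \<and> T closure_of Os (Suc k) \<subseteq> Os k
      \<and> P k (Os (Suc k))) \<and> Os 0 \<subseteq> topspace T"
    define C where "C = (\<lambda>k. T closure_of Os (Suc k))"
    have sub: "Os k \<subseteq> topspace T" for k using Os openin_subset by blast
    have shrinking: "T closure_of Os (Suc k) \<subseteq> Os k" for k using Os by blast
    note nest = closure_of_nest[of Os T, OF sub shrinking, folded C_def]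
    have closed: "closedin mtopology (C k)" for k unfolding C_def T by simp
    have nonempty: "C k \<noteq> {}" for k using Os sub by (simp add: C_def closure_of_eq_empty)
    have small: "\<exists>n a. C n \<subseteq> mcball a e" if "e > 0" for e
    proof -
      obtain n :: nat where n: "1 / real (Suc n) < e" using \<open>e > 0\<close> by (rule nat_approx_posE)
      obtain a where "Os (Suc n) \<subseteq> mcball a (1 / real (Suc n))" using Os unfolding P_def by blast
      then have "C n \<subseteq> mcball a (1 / real (Suc n))"
        unfolding C_def T by (rule closure_of_minimal) simp
      also have "\<dots> \<subseteq> mcball a e" using n by (intro mcball_subset_concentric) simp
      finally show ?thesis by blast
    qed
    have "(\<Inter>k. C k) \<noteq> {}"
      by (rule complete[unfolded mcomplete_nest, rule_format]) (use closed nonempty nest(1) small in blast)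
    then show "(\<Inter>k. Os k) \<noteq> {}" using nest(2) by simp
  qed (use assms(2) in simp_all)
  then show ?thesis by blast
qed

lemma locally_compact_imp_nest_complete:
  assumes "locally_compact_space T" and "topspace T \<noteq> {}"
  shows "\<exists>R. nest_complete_on T R (\<lambda>_ _. True)"
proof -
  obtain x where "x \<in> topspace T" using assms(2) by blast
  then obtain R K where R: "openin T R" "compactin T K" "x \<in> R" "R \<subseteq> K"
    using assms(1) unfolding locally_compact_space_def by blast
  have "nest_complete_on T R (\<lambda>_ _. True)"
    unfolding nest_complete_on_def
  proof (intro conjI allI impI)
    fix Os assume Os: "(\<forall>k. openin T (Os k) \<and> Os k \<noteq> {} \<and> T closure_of Os (Suc k) \<subseteq> Os k \<and> True)
      \<and> Os 0 \<subseteq> R"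
    define C where "C = (\<lambda>k. T closure_of Os (Suc k))"
    have sub: "Os k \<subseteq> topspace T" for k using Os openin_subset by blast
    have shrinking: "T closure_of Os (Suc k) \<subseteq> Os k" for k using Os by blast
    note nest = closure_of_nest[of Os T, OF sub shrinking, folded C_def]
    have CK: "C k \<subseteq> K" for k
    proof -
      have "C k \<subseteq> C 0" using decseqD[OF nest(1), of 0 k] by simp
      also have "\<dots> \<subseteq> R" using Os unfolding C_def by blast
      finally show ?thesis using R(4) by blast
    qed
    have "(\<Inter>k. C k) \<noteq> {}"
    proof (rule compact_space_imp_nest[OF compact_space_subtopology[OF R(2)]])
      show "closedin (subtopology T K) (C k)" for k
        using CK by (intro closedin_subset_topspace) (simp_all add: C_def)
      show "C k \<noteq> {}" for k using Os sub by (simp add: C_def closure_of_eq_empty)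
      show "decseq C" by (fact nest(1))
    qed
    then show "(\<Inter>k. Os k) \<noteq> {}" using nest(2) by simp
  qed (use R in auto)
  then show ?thesis by blast
qed

primrec cantor_branch ::
  "(nat \<Rightarrow> bool \<Rightarrow> 'a set \<Rightarrow> 'a set) \<Rightarrow> 'a set \<Rightarrow> (nat \<Rightarrow> bool) \<Rightarrow> nat \<Rightarrow> 'a set" where
  "cantor_branch F R s 0 = R"
| "cantor_branch F R s (Suc k) = F k (s k) (cantor_branch F R s k)"

lemma cantor_branch_cong:
  "(\<And>j. j < k \<Longrightarrow> s j = t j) \<Longrightarrow> cantor_branch F R s k = cantor_branch F R t k"
  by (induction k) simp_all

lemma cantor_branches_separate:
  assumes "s \<noteq> t"
  obtains k where "s k \<noteq> t k" and "cantor_branch F R s k = cantor_branch F R t k"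
proof -
  have "\<exists>k. s k \<noteq> t k" using assms by (simp add: fun_eq_iff)
  then obtain k where k: "s k \<noteq> t k" and agree: "\<And>j. j < k \<Longrightarrow> s j = t j"
    unfolding exists_least_iff[of "\<lambda>k. s k \<noteq> t k"] by blast
  have "cantor_branch F R s k = cantor_branch F R t k" using agree by (rule cantor_branch_cong)
  with k show ?thesis by (rule that)
qed

lemma cantor_scheme_Pow_lepoll:
  assumes nest: "nest_complete_on T R P"
    and F: "\<And>n b Q. openin T Q \<Longrightarrow> Q \<noteq> {} \<Longrightarrow> Q \<subseteq> R \<Longrightarrow>
              openin T (F n b Q) \<and> F n b Q \<noteq> {} \<and> T closure_of F n b Q \<subseteq> Q \<and> P n (F n b Q)"
    and disjoint: "\<And>n Q. openin T Q \<Longrightarrow> Q \<noteq> {} \<Longrightarrow> Q \<subseteq> R \<Longrightarrow>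
              f ` F n True Q \<inter> f ` F n False Q = {}"
  shows "Pow (UNIV :: nat set) \<lesssim> f ` R"
proof -
  define admissible where "admissible Q \<longleftrightarrow> openin T Q \<and> Q \<noteq> {} \<and> Q \<subseteq> R" for Q
  have F_admissible: "admissible (F n b Q)" "T closure_of F n b Q \<subseteq> Q" "P n (F n b Q)"
    if "admissible Q" for n b Q
  proof -
    have F_Q: "openin T (F n b Q)" "F n b Q \<noteq> {}" "T closure_of F n b Q \<subseteq> Q" "P n (F n b Q)"
      using F[of Q n b] that unfolding admissible_def by blast+
    have "F n b Q \<subseteq> Q" using closure_of_subset[OF openin_subset[OF F_Q(1)]] F_Q(3) by (rule order_trans)
    then show "admissible (F n b Q)" using F_Q(1,2) that unfolding admissible_def by blast
    show "T closure_of F n b Q \<subseteq> Q" "P n (F n b Q)" by (fact F_Q(3,4))+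
  qed
  have branch: "admissible (cantor_branch F R s k)" for s k
  proof (induction k)
    case 0
    then show ?case using nest_complete_onD(1,2)[OF nest] unfolding admissible_def by simp
  next
    case (Suc k)
    then show ?case by (simp add: F_admissible(1))
  qed
  have "(\<Inter>k. cantor_branch F R s k) \<noteq> {}" for s
  proof (rule nest_complete_onD(4)[OF nest])
    fix k
    show "openin T (cantor_branch F R s k) \<and> cantor_branch F R s k \<noteq> {} \<and>
      T closure_of cantor_branch F R s (Suc k) \<subseteq> cantor_branch F R s k \<and>
      P k (cantor_branch F R s (Suc k))"
      using branch[of s k] F_admissible(2,3)[OF branch[of s k]] unfolding admissible_def by simp
  qed simp
  then have "\<forall>s. \<exists>x. \<forall>k. x \<in> cantor_branch F R s k" by blast
  then obtain X where X: "\<And>s k. X s \<in> cantor_branch F R s k" unfolding choice_iff by blast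
  have X_inj: "s = t" if eq: "f (X s) = f (X t)" for s t
  proof (rule ccontr)
    assume "s \<noteq> t"
    then obtain k where k: "s k \<noteq> t k" and branches_agree: "cantor_branch F R s k = cantor_branch F R t k"
      by (rule cantor_branches_separate)
    define Q where "Q = cantor_branch F R s k"
    have Q_t: "Q = cantor_branch F R t k" unfolding Q_def by (fact branches_agree)
    have "f ` F k True Q \<inter> f ` F k False Q = {}"
      using branch[of s k] unfolding Q_def admissible_def by (intro disjoint) simp_all
    then have disjoint_st: "f ` F k (s k) Q \<inter> f ` F k (t k) Q = {}"
      using k by (cases "s k") (simp_all add: Int_commute)
    have "X s \<in> F k (s k) Q" using X[of s "Suc k"] by (simp add: Q_def)
    then have "f (X s) \<in> f ` F k (s k) Q" by (rule imageI)
    moreover have "X t \<in> F k (t k) Q" using X[of t "Suc k"] by (simp add: Q_t)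
    then have "f (X s) \<in> f ` F k (t k) Q" unfolding eq by (rule imageI)
    ultimately show False using disjoint_st by blast
  qed
  show ?thesis unfolding lepoll_def
  proof (intro exI conjI)
    show "inj_on (\<lambda>S. f (X (\<lambda>n. n \<in> S))) (Pow UNIV)"
      by (rule inj_onI) (metis X_inj Collect_mem_eq)
    show "(\<lambda>S. f (X (\<lambda>n. n \<in> S))) ` Pow UNIV \<subseteq> f ` R"
      using X[of _ 0] by auto
  qed
qed

lemma nest_complete_split_imp_Pow_lepoll:
  assumes nest: "nest_complete_on T R P"
    and split: "\<And>Q. openin T Q \<Longrightarrow> Q \<noteq> {} \<Longrightarrow> Q \<subseteq> R \<Longrightarrow>
      \<exists>A B. openin T A \<and> A \<noteq> {} \<and> openin T B \<and> B \<noteq> {} \<and>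
            T closure_of A \<subseteq> Q \<and> T closure_of B \<subseteq> Q \<and> f ` A \<inter> f ` B = {}"
  shows "Pow (UNIV :: nat set) \<lesssim> f ` R"
proof -
  define good where "good n Q A \<longleftrightarrow> openin T A \<and> A \<noteq> {} \<and> T closure_of A \<subseteq> Q \<and> P n A"
    for n Q A
  have shrink: "\<exists>A. good n Q A \<and> A \<subseteq> A0"
    if A0: "openin T A0" "A0 \<noteq> {}" "T closure_of A0 \<subseteq> Q" and "Q \<subseteq> R" for n Q A0
  proof -
    have "A0 \<subseteq> Q" using closure_of_subset[OF openin_subset[OF A0(1)]] A0(3) by blast
    then have "A0 \<subseteq> R" using \<open>Q \<subseteq> R\<close> by blast
    then obtain A where A: "openin T A" "A \<noteq> {}" "A \<subseteq> A0" "P n A"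
      using nest_complete_onD(3)[OF nest A0(1,2)] by blast
    have "T closure_of A \<subseteq> Q" using closure_of_mono[OF A(3)] A0(3) by blast
    then show ?thesis using A unfolding good_def by blast
  qed
  have good_split: "\<exists>AB. good n Q (fst AB) \<and> good n Q (snd AB) \<and> f ` fst AB \<inter> f ` snd AB = {}"
    if Q: "openin T Q" "Q \<noteq> {}" "Q \<subseteq> R" for n Q
  proof -
    obtain A0 B0 where A0: "openin T A0" "A0 \<noteq> {}" "T closure_of A0 \<subseteq> Q"
      and B0: "openin T B0" "B0 \<noteq> {}" "T closure_of B0 \<subseteq> Q"
      and disjoint: "f ` A0 \<inter> f ` B0 = {}"
      using split[OF Q] by blast
    obtain A where "good n Q A" "A \<subseteq> A0" using shrink[OF A0 Q(3)] by blast
    moreover obtain B where "good n Q B" "B \<subseteq> B0" using shrink[OF B0 Q(3)] by blast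
    ultimately show ?thesis using disjoint by (intro exI[of _ "(A, B)"]) auto
  qed
  define F where "F n b Q = (if b then fst else snd)
      (SOME AB. good n Q (fst AB) \<and> good n Q (snd AB) \<and> f ` fst AB \<inter> f ` snd AB = {})" for n b Q
  show ?thesis
  proof (rule cantor_scheme_Pow_lepoll[OF nest, where F = F])
    fix n b Q assume "openin T Q" "Q \<noteq> {}" "Q \<subseteq> R"
    from someI_ex[OF good_split[OF this, of n]]
    show "openin T (F n b Q) \<and> F n b Q \<noteq> {} \<and> T closure_of F n b Q \<subseteq> Q \<and> P n (F n b Q)"
      unfolding F_def good_def by (cases b) simp_all
  next
    fix n Q assume "openin T Q" "Q \<noteq> {}" "Q \<subseteq> R"
    from someI_ex[OF good_split[OF this, of n]] show "f ` F n True Q \<inter> f ` F n False Q = {}"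
      unfolding F_def by simp
  qed
qed

lemma l_coset_mono:
  fixes G (structure)
  shows "X \<subseteq> Y \<Longrightarrow> a <# X \<subseteq> a <# Y"
  unfolding l_coset_def by blast

lemma (in group_hom) image_l_cosets_disjoint:
  assumes W: "W \<subseteq> carrier G" "\<And>w. w \<in> W \<Longrightarrow> inv w \<in> W"
    and p: "p \<in> carrier G" and x: "x \<in> carrier G" "h x \<notin> h ` (W <#> W)"
  shows "h ` (p <# W) \<inter> h ` ((p \<otimes> x) <# W) = {}"
proof -
  have distinct: "h (p \<otimes> w1) \<noteq> h (p \<otimes> x \<otimes> w2)" if w: "w1 \<in> W" "w2 \<in> W" for w1 w2
  proof
    assume eq: "h (p \<otimes> w1) = h (p \<otimes> x \<otimes> w2)"
    have carrier: "w1 \<in> carrier G" "w2 \<in> carrier G" using w W(1) by auto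
    then have "h p \<otimes>\<^bsub>H\<^esub> h w1 = h p \<otimes>\<^bsub>H\<^esub> (h x \<otimes>\<^bsub>H\<^esub> h w2)"
      using eq p x by (simp add: H.m_assoc)
    then have "h w1 = h x \<otimes>\<^bsub>H\<^esub> h w2" using carrier p x by simp
    then have "h (w1 \<otimes> inv w2) = h x" using carrier x by (simp add: H.m_assoc)
    moreover have "w1 \<otimes> inv w2 \<in> W <#> W" using w W(2) unfolding set_mult_def by blast
    ultimately show False using x(2) by (metis imageI)
  qed
  show ?thesis
  proof (rule equals0I)
    fix y assume "y \<in> h ` (p <# W) \<inter> h ` ((p \<otimes> x) <# W)"
    then obtain w1 w2 where "w1 \<in> W" "w2 \<in> W" "h (p \<otimes> w1) = h (p \<otimes> x \<otimes> w2)"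
      unfolding l_coset_def by auto
    with distinct show False by blast
  qed
qed

locale top_group =
  fixes H (structure) and T :: "'a topology"
  assumes topological_group: "topological_group H T"
begin

sublocale group H
  using topological_group by (simp add: topological_group_def)

lemma topspace_eq: "topspace T = carrier H"
  using topological_group by (simp add: topological_group_def)

lemma openin_subset_carrier: "openin T U \<Longrightarrow> U \<subseteq> carrier H"
  using openin_subset topspace_eq by blast

lemma continuous_map_mult: "continuous_map (prod_topology T T) T (\<lambda>(x, y). x \<otimes> y)"
  using topological_group by (simp add: topological_group_def)

lemma continuous_map_inv: "continuous_map T T (\<lambda>x. inv x)"
  using topological_group by (simp add: topological_group_def)

lemma continuous_map_lmult:
  assumes "a \<in> carrier H"
  shows "continuous_map T T (\<lambda>y. a \<otimes> y)"
proof -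
  have "continuous_map T (prod_topology T T) (\<lambda>y. (a, y))"
    by (rule continuous_map_pairedI) (simp_all add: topspace_eq assms)
  then have "continuous_map T T ((\<lambda>(x, y). x \<otimes> y) \<circ> (\<lambda>y. (a, y)))"
    using continuous_map_mult by (rule continuous_map_compose)
  then show ?thesis by (simp add: o_def)
qed

lemma openin_l_coset:
  assumes a: "a \<in> carrier H" and U: "openin T U"
  shows "openin T (a <# U)"
proof -
  have "a <# U = {y \<in> topspace T. inv a \<otimes> y \<in> U}"
  proof (intro equalityI subsetI)
    fix y assume "y \<in> a <# U"
    then obtain u where "u \<in> U" "y = a \<otimes> u" unfolding l_coset_def by blast
    then show "y \<in> {y \<in> topspace T. inv a \<otimes> y \<in> U}"
      using a openin_subset_carrier[OF U] by (auto simp: topspace_eq m_assoc[symmetric])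
  next
    fix y assume "y \<in> {y \<in> topspace T. inv a \<otimes> y \<in> U}"
    then have "inv a \<otimes> y \<in> U" and "y = a \<otimes> (inv a \<otimes> y)"
      using a by (simp_all add: topspace_eq m_assoc[symmetric])
    then show "y \<in> a <# U" unfolding l_coset_def by blast
  qed
  then show ?thesis
    using openin_continuous_map_preimage[OF continuous_map_lmult[OF inv_closed[OF a]] U] by simp
qed

lemma symmetric_nhd_square_subset:
  assumes U: "openin T U" "\<one> \<in> U"
  obtains W where "openin T W" "\<one> \<in> W" "\<And>w. w \<in> W \<Longrightarrow> inv w \<in> W" "W <#> W \<subseteq> U"
proof -
  let ?S = "{z \<in> topspace (prod_topology T T). (\<lambda>(x, y). x \<otimes> y) z \<in> U}"
  have "openin (prod_topology T T) ?S"
    using continuous_map_mult U(1) by (rule openin_continuous_map_preimage)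
  moreover have "(\<one>, \<one>) \<in> ?S" using U(2) by (simp add: topspace_eq)
  ultimately have "\<exists>V1 V2. openin T V1 \<and> openin T V2 \<and> \<one> \<in> V1 \<and> \<one> \<in> V2 \<and> V1 \<times> V2 \<subseteq> ?S"
    by (rule openin_prod_topology_alt[THEN iffD1, rule_format])
  then obtain V1 V2 where V: "openin T V1" "openin T V2" "\<one> \<in> V1" "\<one> \<in> V2"
    and V_prod: "V1 \<times> V2 \<subseteq> ?S"
    by blast
  define W0 where "W0 = V1 \<inter> V2"
  define W where "W = {x \<in> topspace T. inv x \<in> W0} \<inter> W0"
  have W0: "openin T W0" using V by (simp add: W0_def openin_Int)
  show ?thesis
  proof (rule that)
    show "openin T W"
      unfolding W_def using continuous_map_inv W0 by (intro openin_Int openin_continuous_map_preimage)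
    show "\<one> \<in> W" using V by (simp add: W_def W0_def topspace_eq)
    show "inv w \<in> W" if "w \<in> W" for w
    proof -
      have w: "w \<in> W0" "inv w \<in> W0" using that unfolding W_def by simp_all
      then have "w \<in> carrier H" using openin_subset_carrier[OF W0] by blast
      then show ?thesis using w unfolding W_def by (simp add: topspace_eq)
    qed
    show "W <#> W \<subseteq> U"
    proof
      fix z assume "z \<in> W <#> W"
      then obtain a b where ab: "a \<in> W" "b \<in> W" and z: "z = a \<otimes> b"
        unfolding set_mult_def by blast
      then have "(a, b) \<in> V1 \<times> V2" unfolding W_def W0_def by blast
      then have "(a, b) \<in> ?S" by (rule subsetD[OF V_prod])
      then show "z \<in> U" using z by simp
    qed
  qed
qed

lemma closure_of_subset_set_mult:
  assumes W: "openin T W" "\<one> \<in> W" "\<And>w. w \<in> W \<Longrightarrow> inv w \<in> W"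
  shows "T closure_of S \<subseteq> S <#> W"
proof
  fix x assume x: "x \<in> T closure_of S"
  then have x_carrier: "x \<in> carrier H" using topspace_eq unfolding in_closure_of by simp
  have open_xW: "openin T (x <# W)" using x_carrier W(1) by (rule openin_l_coset)
  have "x \<in> x <# W"
    unfolding l_coset_def using W(2) x_carrier by (intro UN_I[of \<one>]) simp_all
  then obtain s where s: "s \<in> S" "s \<in> x <# W" using x open_xW unfolding in_closure_of by meson
  then obtain w where w: "w \<in> W" "s = x \<otimes> w" unfolding l_coset_def by blast
  have "w \<in> carrier H" using w(1) openin_subset_carrier[OF W(1)] by blast
  then have "s \<otimes> inv w = x" using x_carrier by (simp add: w(2) m_assoc)
  then show "x \<in> S <#> W"
    unfolding set_mult_def by (intro UN_I[OF s(1)] UN_I[OF W(3)[OF w(1)]]) simp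
qed

lemma closure_of_l_coset_subset:
  assumes W: "openin T W" "\<one> \<in> W" "\<And>w. w \<in> W \<Longrightarrow> inv w \<in> W" and a: "a \<in> carrier H"
  shows "T closure_of (a <# W) \<subseteq> a <# (W <#> W)"
proof -
  have "T closure_of (a <# W) \<subseteq> (a <# W) <#> W" by (rule closure_of_subset_set_mult[OF W])
  also have "\<dots> = a <# (W <#> W)"
    using openin_subset_carrier[OF W(1)] openin_subset_carrier[OF W(1)] a by (rule setmult_lcos_assoc)
  finally show ?thesis .
qed

lemma nhd_square_l_coset_subset:
  assumes Q: "openin T Q" "p \<in> Q"
  obtains V where "openin T V" "\<one> \<in> V" "p <# (V <#> V) \<subseteq> Q"
proof -
  have p: "p \<in> carrier H" using Q openin_subset_carrier by blast
  have "openin T (inv p <# Q)" using p Q by (simp add: openin_l_coset)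
  moreover have "\<one> \<in> inv p <# Q"
    unfolding l_coset_def using p Q(2) by (intro UN_I[of p]) simp_all
  ultimately obtain V where V: "openin T V" "\<one> \<in> V" "\<And>w. w \<in> V \<Longrightarrow> inv w \<in> V"
    and VV: "V <#> V \<subseteq> inv p <# Q"
    by (rule symmetric_nhd_square_subset) blast
  have "p <# (V <#> V) \<subseteq> p <# (inv p <# Q)" using VV by (rule l_coset_mono)
  also have "\<dots> = Q"
    using p openin_subset_carrier[OF Q(1)] by (simp add: lcos_m_assoc lcos_mult_one)
  finally show ?thesis by (rule that[OF V(1,2)])
qed

lemma unstable_image_witness:
  assumes unstable: "\<forall>V. openin T V \<and> \<one> \<in> V \<longrightarrow> (\<exists>V'. nhd_in T \<one> V' \<and> V' \<subseteq> V \<and> \<phi> ` V' \<noteq> \<phi> ` V)"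
    and V: "openin T V" "\<one> \<in> V"
  obtains h W where "h \<in> V" "openin T W" "\<one> \<in> W" "\<And>w. w \<in> W \<Longrightarrow> inv w \<in> W" "W <#> W \<subseteq> V"
    "\<phi> h \<notin> \<phi> ` (W <#> W)"
proof -
  obtain N where N: "nhd_in T \<one> N" "N \<subseteq> V" "\<phi> ` N \<noteq> \<phi> ` V"
    using unstable V by iprover
  then have "\<not> \<phi> ` V \<subseteq> \<phi> ` N" using image_mono[where f = \<phi>, OF N(2)] by (metis subset_antisym)
  then obtain h where h: "h \<in> V" "\<phi> h \<notin> \<phi> ` N" unfolding image_subset_iff by blast
  obtain N0 where N0: "openin T N0" "\<one> \<in> N0" "N0 \<subseteq> N" using N(1) unfolding nhd_in_def by blast
  obtain W where W: "openin T W" "\<one> \<in> W" "\<And>w. w \<in> W \<Longrightarrow> inv w \<in> W" "W <#> W \<subseteq> N0"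
    using N0(1,2) by (rule symmetric_nhd_square_subset) blast
  show ?thesis
  proof (rule that)
    show "h \<in> V" "openin T W" "\<one> \<in> W" by (fact h(1) W(1,2))+
    show "inv w \<in> W" if "w \<in> W" for w using W(3) that .
    show "W <#> W \<subseteq> V" using W(4) N0(3) N(2) by blast
    show "\<phi> h \<notin> \<phi> ` (W <#> W)" using h(2) image_mono[where f = \<phi>, OF order_trans[OF W(4) N0(3)]] by blast
  qed
qed

lemma hom_image_split:
  assumes hom: "group_hom H G \<phi>"
    and unstable: "\<forall>V. openin T V \<and> \<one> \<in> V \<longrightarrow> (\<exists>V'. nhd_in T \<one> V' \<and> V' \<subseteq> V \<and> \<phi> ` V' \<noteq> \<phi> ` V)"
    and Q: "openin T Q" "Q \<noteq> {}"
  shows "\<exists>A B. openin T A \<and> A \<noteq> {} \<and> openin T B \<and> B \<noteq> {} \<and>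
           T closure_of A \<subseteq> Q \<and> T closure_of B \<subseteq> Q \<and> \<phi> ` A \<inter> \<phi> ` B = {}"
proof -
  obtain p where "p \<in> Q" using Q(2) by blast
  then have p: "p \<in> carrier H" using openin_subset_carrier[OF Q(1)] by blast
  obtain V where V: "openin T V" "\<one> \<in> V" and pVV: "p <# (V <#> V) \<subseteq> Q"
    using Q(1) \<open>p \<in> Q\<close> by (rule nhd_square_l_coset_subset)
  obtain h W where h: "h \<in> V" and W: "openin T W" "\<one> \<in> W" "\<And>w. w \<in> W \<Longrightarrow> inv w \<in> W"
    and WW: "W <#> W \<subseteq> V" and h_outside: "\<phi> h \<notin> \<phi> ` (W <#> W)"
    using unstable V by (rule unstable_image_witness) blast
  have V_square: "x <# V \<subseteq> V <#> V" if "x \<in> V" for x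
    using that by (simp add: l_coset_eq_set_mult mono_set_mult)
  have V_carrier: "V \<subseteq> carrier H" using openin_subset_carrier[OF V(1)] .
  then have "V \<subseteq> V <#> V" using V_square[OF V(2)] by (simp add: lcos_mult_one)
  have h_carrier: "h \<in> carrier H" using h V_carrier by blast
  have open_pW: "openin T (p <# W)" and open_phW: "openin T ((p \<otimes> h) <# W)"
    using W(1) p h_carrier by (simp_all add: openin_l_coset)
  have "p \<in> p <# W" "p \<otimes> h \<in> (p \<otimes> h) <# W"
    unfolding l_coset_def using W(2) p h_carrier by (intro UN_I[of \<one>]; simp)+
  then have ne_pW: "p <# W \<noteq> {}" and ne_phW: "(p \<otimes> h) <# W \<noteq> {}" by auto
  have "T closure_of (p <# W) \<subseteq> p <# (W <#> W)" by (rule closure_of_l_coset_subset[OF W(1-3) p])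
  also have "\<dots> \<subseteq> p <# (V <#> V)" using WW \<open>V \<subseteq> V <#> V\<close> by (intro l_coset_mono) blast
  finally have closure_pW: "T closure_of (p <# W) \<subseteq> Q" using pVV by (rule order_trans)
  have "T closure_of ((p \<otimes> h) <# W) \<subseteq> (p \<otimes> h) <# (W <#> W)"
    by (rule closure_of_l_coset_subset[OF W(1-3) m_closed[OF p h_carrier]])
  also have "\<dots> \<subseteq> (p \<otimes> h) <# V" using WW by (rule l_coset_mono)
  also have "\<dots> = p <# (h <# V)" using V_carrier p h_carrier by (simp add: lcos_m_assoc)
  also have "\<dots> \<subseteq> p <# (V <#> V)" using V_square[OF h] by (rule l_coset_mono)
  finally have closure_phW: "T closure_of ((p \<otimes> h) <# W) \<subseteq> Q" using pVV by (rule order_trans)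
  have "\<phi> ` (p <# W) \<inter> \<phi> ` ((p \<otimes> h) <# W) = {}"
    using openin_subset_carrier[OF W(1)] W(3) p h_carrier h_outside
    by (intro group_hom.image_l_cosets_disjoint[OF hom]) auto
  with open_pW ne_pW open_phW ne_phW closure_pW closure_phW show ?thesis by iprover
qed
end

theorem proposition3p5:
  fixes H :: "('a, 'b) monoid_scheme" and T :: "'a topology"
    and G :: "('c, 'd) monoid_scheme" and \<phi> :: "'a \<Rightarrow> 'c"
  assumes "topological_group H T"
    and "completely_metrizable_space T \<or> (locally_compact_space T \<and> Hausdorff_space T)"
    and "group G"
    and "carrier G \<prec> Pow (UNIV :: nat set)"
    and "\<phi> \<in> hom H G"
  shows "\<exists>V. openin T V \<and> \<one>\<^bsub>H\<^esub> \<in> V \<and>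
           (\<forall>V'. nhd_in T \<one>\<^bsub>H\<^esub> V' \<and> V' \<subseteq> V \<longrightarrow> \<phi> ` V' = \<phi> ` V)"
proof (rule ccontr)
  assume "\<not> ?thesis"
  then have unstable: "\<forall>V. openin T V \<and> \<one>\<^bsub>H\<^esub> \<in> V \<longrightarrow>
      (\<exists>V'. nhd_in T \<one>\<^bsub>H\<^esub> V' \<and> V' \<subseteq> V \<and> \<phi> ` V' \<noteq> \<phi> ` V)"
    by meson
  interpret top_group H T using assms(1) by (rule top_group.intro)
  have hom: "group_hom H G \<phi>"
    using assms(3,5) is_group by (simp add: group_hom_def group_hom_axioms_def)
  have "topspace T \<noteq> {}" using topspace_eq by auto
  then obtain R P where nest: "nest_complete_on T R P"
    using assms(2) completely_metrizable_imp_nest_complete locally_compact_imp_nest_complete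
    by blast
  have "Pow (UNIV :: nat set) \<lesssim> \<phi> ` R"
    using nest by (rule nest_complete_split_imp_Pow_lepoll) (rule hom_image_split[OF hom unstable])
  also have "\<phi> ` R \<lesssim> carrier G"
    using nest_complete_onD(1)[OF nest] assms(5) openin_subset_carrier
    by (intro subset_imp_lepoll) (auto simp: hom_def Pi_iff)
  also have "carrier G \<prec> Pow (UNIV :: nat set)" by (fact assms(4))
  finally show False by simp
qed

end
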